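(* Assume the hypotheses of the one-step error recursion hold, and let $\Upsilon_C>0$, $\rho\in(0,1)$ be constants such that for every $i\in[1,T]$ with $(\tilde z_i^0,\tilde\lambda_i^0)\in\mathcal N_\epsilon(\tilde z_i^\star,\tilde\lambda_i^\star)$ the recursion $$\Psi^1_{k,i}\le\Upsilon_C\Big(\sum_{j=n_1(i)}^{n_2(i)}\rho^{|k-j|}(\Psi^0_{j,i})^2+\rho^{k-n_1(i)}\|x^0_{n_1(i),i}-x^\star_{n_1(i)}\|+\rho^{n_2(i)-k}\epsilon\Big),\quad k\in[n_1(i),n_2(i)],$$ holds. Suppose $L$ and $\epsilon$ satisfy $$\rho^L\le\epsilon\le\frac{1-\rho}{16\Upsilon_C(1+\rho)}.$$ Then for every $i\in[1,T-1]$: if $(\tilde z_i^0,\tilde\lambda_i^0)\in\mathcal N_\epsilon(\tilde z_i^\star,\tilde\lambda_i^\star)$, then $(\tilde z_{i+1}^0,\tilde\lambda_{i+1}^0)\in\mathcal N_\epsilon(\tilde z_{i+1}^\star,\tilde\lambda_{i+1}^\star)$.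
   Context: Notation: $[k]=\{0,1,\dots,k\}$; for integers $k_1<k_2$, $[k_1,k_2]$, $[k_1,k_2)$, $(k_1,k_2]$ denote the corresponding sets of integers; $a\vee b=\max(a,b)$, $a\wedge b=\min(a,b)$. Full-horizon problem $\mathcal P_{0:N}(d)$: minimize $\sum_{k=0}^{N-1}g_k(x_k,u_k;d_k)+g_N(x_N)$ over $x_k\in\mathbb R^{n_x}$, $u_k\in\mathbb R^{n_u}$ subject to $x_{k+1}=f_k(x_k,u_k;d_k)$, $k\in[N-1]$, $x_0=\bar x_0$; $g_k,f_k,g_N$ twice continuously differentiable. Write $z_k=(x_k;u_k)$ ($k<N$), $z_N=x_N$, multipliers $\lambda=(\lambda_{-1};\dots;\lambda_{N-1})$, stage Lagrangians $\mathcal L_k=g_k(z_k;d_k)+\lambda_{k-1}^Tx_k-\lambda_k^Tf_k(z_k;d_k)$. $(z^\star,\lambda^\star)$ is a fixed KKT solution of $\mathcal P_{0:N}(d)$. "The hypotheses of the one-step error recursion" are: (a) Uniform SOSC in the $M$-neighborhood: reduced Hessian of the full problem $\succeq\gamma_H I$ at every point agreeing with $(z^\star,\lambda^\star)$ outside a window of $M+1$ consecutive stages and within $\epsilon$ (componentwise in $x_k,u_k,\lambda_k$) inside it; (b) controllability: for each $k\in[N-t]$ some $t_k\in[1,t]$ with $\Xi_{k,t_k}\Xi_{k,t_k}^T\succeq\gamma_C I$ at all points within $\epsilon$ of $z^\star$, where $\Xi_{k,s}=(B_{k+s-1},A_{k+s-1}B_{k+s-2},\dots,A_{k+s-1}\cdots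 A_{k+1}B_k)$, $A_k,B_k$ the Jacobians of $f_k$; (c) $\|A_k\|,\|B_k\|,\|H_k\|,\|\nabla^2 g_N\|\le\Upsilon$ (with $\Upsilon\ge2+\sqrt2$) within $\epsilon$ of the solution, $H_k$ the Hessian of $\mathcal L_k$ in $(x_k,u_k)$; (d) $H_k$ and $\nabla f_k$ are $\Upsilon_L$-Lipschitz within $\epsilon$ of the solution; (e) $\mu\ge16\Upsilon(\Upsilon^{6t}-\Upsilon^{4t})/\gamma_C^2$. All constants are independent of $N$. Receding horizons: integers $L\ge1$, $M=SL$ with $S>2$ an integer, $N\ge M$; $T=\lceil(N-M)/L\rceil+1$; $n_1(i)=(i-1)L$, $n_2(i)=(n_1(i)+M)\wedge N$ for $i\in[1,T]$. A fixed guess $(z^0,\lambda^0)$ with $\|x_k^0-x_k^\star\|\vee\|u_k^0-u_k^\star\|\vee\|\lambda_k^0-\lambda_k^\star\|\le\epsilon$ for all $k$ and $x_0^0=\bar x_0$ is given. Subproblem $i$: minimize over $x_{n_1(i):n_2(i)},u_{n_1(i):n_2(i)-1}$ the cost $\sum_{k=n_1(i)}^{n_2(i)-1}g_k(z_k;d_k)+\Phi_i(x_{n_2(i)})$ subject to $x_{k+1}=f_k(z_k;d_k)$, $k\in[n_1(i),n_2(i)-1]$, $x_{n_1(i)}=\bar x_{n_1(i)}$, where for $i<T$, $\Phi_i(x)=g_{n_2(i)}(x,u^0_{n_2(i)};d_{n_2(i)})-(\lambda^0_{n_2(i)})^Tf_{n_2(i)}(x,u^0_{n_2(i)};d_{n_2(i)})+\frac\mu2\|x-x^0_{n_2(i)}\|^2$,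 and $\Phi_T=g_N$. Its Lagrangian is $\mathcal L^i=\sum_{k=n_1(i)}^{n_2(i)-1}\mathcal L_k+\Phi_i(x_{n_2(i)})+\lambda_{n_2(i)-1}^Tx_{n_2(i)}-\lambda_{n_1(i)-1}^T\bar x_{n_1(i)}$ in $\tilde z_i=(z_{n_1(i)};\dots;z_{n_2(i)-1};x_{n_2(i)})$, $\tilde\lambda_i=\lambda_{n_1(i)-1:n_2(i)-1}$, with KKT matrix $K^i$. Truncated solution $\tilde z_i^\star=(z^\star_{n_1(i):n_2(i)-1};x^\star_{n_2(i)})$, $\tilde\lambda_i^\star=\lambda^\star_{n_1(i)-1:n_2(i)-1}$; $(\tilde z_i,\tilde\lambda_i)\in\mathcal N_\epsilon(\tilde z_i^\star,\tilde\lambda_i^\star)$ means $\|x_k-x_k^\star\|\vee\|u_k-u_k^\star\|\vee\|\lambda_k-\lambda_k^\star\|\le\epsilon$ for $k\in[n_1(i),n_2(i)-1]$ and $\|x_{n_2(i)}-x^\star_{n_2(i)}\|\le\epsilon$. Algorithm 1 (one Newton step per horizon): iterates $(z^0_{k,i},\lambda^0_{k,i})$ (input to subproblem $i$) and $(z^1_{k,i},\lambda^1_{k,i})$ (output), with $z_{n_2(i),i}=x_{n_2(i),i}$. For $i=1$: $z^0_{k,1}=z^0_k$ for $k\in[0,M-1]$, $x^0_{M,1}=x^0_M$, $\lambda^0_{k,1}=\lambda^0_k$ for $k\in[-1,M-1]$. For $i\ge2$: $\bar x_{n_1(i)}=x^1_{n_1(i),i-1}$; $(z^0_{k,i},\lambda^0_{k,i})=(z^1_{k,i-1},\lambda^1_{k,i-1})$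 for $k\in[n_1(i),n_2(i)-2L]$; $(z^0_{k,i},\lambda^0_{k,i})=(z^0_k,\lambda^0_k)$ for $k\in(n_2(i)-2L,n_2(i)-1]$; $x^0_{n_2(i),i}=x^0_{n_2(i)}$; $\lambda^0_{n_1(i)-1,i}=\lambda^1_{n_1(i)-1,i-1}$. Then $(\tilde z_i^1,\tilde\lambda_i^1)=(\tilde z_i^0,\tilde\lambda_i^0)+\Delta$ with $K^i(\tilde z_i^0,\tilde\lambda_i^0;\tilde d_i)\Delta=-\nabla\mathcal L^i(\tilde z_i^0,\tilde\lambda_i^0;\tilde d_i)$. Note $x^0_{n_1(i),i}=\bar x_{n_1(i)}$. Errors: $\Psi^{\mathrm{Id}}_{k,i}=\|(z^{\mathrm{Id}}_{k,i}-z^\star_k;\lambda^{\mathrm{Id}}_{k,i}-\lambda^\star_k)\|$ for $k\in[n_1(i),n_2(i)-1]$ and $\Psi^{\mathrm{Id}}_{n_2(i),i}=\|x^{\mathrm{Id}}_{n_2(i),i}-x^\star_{n_2(i)}\|$, $\mathrm{Id}\in\{0,1\}$. *)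

theory Defs
  imports "HOL-Analysis.Analysis"
begin

definition n1 :: "nat \<Rightarrow> nat \<Rightarrow> nat" where
  "n1 L i = (i - 1) * L"

definition n2 :: "nat \<Rightarrow> nat \<Rightarrow> nat \<Rightarrow> nat \<Rightarrow> nat" where
  "n2 L M N i = min (n1 L i + M) N"

definition Thor :: "nat \<Rightarrow> nat \<Rightarrow> nat \<Rightarrow> nat" where
  "Thor L M N = nat \<lceil>(real N - real M) / real L\<rceil> + 1"

text \<open>Multipliers are indexed by integers (lambda_{-1} exists).\<close>

definition in_Neps ::
  "nat \<Rightarrow> nat \<Rightarrow> real \<Rightarrow> (nat \<Rightarrow> real^'nx) \<Rightarrow> (nat \<Rightarrow> real^'nu) \<Rightarrow> (int \<Rightarrow> real^'nx)
   \<Rightarrow> (nat \<Rightarrow> real^'nx) \<Rightarrow> (nat \<Rightarrow> real^'nu) \<Rightarrow> (int \<Rightarrow> real^'nx) \<Rightarrow> bool" where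
  "in_Neps a b \<epsilon> x u l xs us ls \<longleftrightarrow>
     (\<forall>k. a \<le> k \<and> k < b \<longrightarrow>
        norm (x k - xs k) \<le> \<epsilon> \<and> norm (u k - us k) \<le> \<epsilon> \<and> norm (l (int k) - ls (int k)) \<le> \<epsilon>)
     \<and> norm (x b - xs b) \<le> \<epsilon>"

text \<open>Error Psi_k on the window [a,b]: Euclidean norm of the stacked vector
  (x_k - x*_k; u_k - u*_k; lambda_k - lambda*_k) for k < b, and norm (x_b - x*_b) for k = b.\<close>

definition Psi ::
  "nat \<Rightarrow> (nat \<Rightarrow> real^'nx) \<Rightarrow> (nat \<Rightarrow> real^'nu) \<Rightarrow> (int \<Rightarrow> real^'nx)
   \<Rightarrow> (nat \<Rightarrow> real^'nx) \<Rightarrow> (nat \<Rightarrow> real^'nu) \<Rightarrow> (int \<Rightarrow> real^'nx) \<Rightarrow> nat \<Rightarrow> real" where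
  "Psi b x u l xs us ls k =
     (if k < b then sqrt ((norm (x k - xs k))\<^sup>2 + (norm (u k - us k))\<^sup>2 + (norm (l (int k) - ls (int k)))\<^sup>2)
      else norm (x b - xs b))"

end

theory Submission
  imports Defs
begin

text \<open>On the interior stages \<open>[n\<^sub>1 + L, n\<^sub>2 - L]\<close> of window \<open>i\<close> both boundary terms of the
  error recursion carry a factor \<open>\<rho>\<^sup>L \<le> \<epsilon>\<close>, so they are at most \<open>\<epsilon>\<^sup>2\<close>, while the coupling term is
  at most \<open>3\<epsilon>\<^sup>2 (1 + \<rho>) / (1 - \<rho>)\<close>, the geometric weights summing to at most \<open>(1 + \<rho>) / (1 - \<rho>)\<close>.
  The bound on \<open>\<epsilon>\<close> makes the total at most \<open>5\<epsilon>/16\<close>. Window \<open>i + 1\<close> is warm-started from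
  exactly these interior stages, and its last \<open>2L\<close> stages come from the initial guess, which is
  \<open>\<epsilon>\<close>-close by assumption.\<close>

lemma sum_power_lessThan_le:
  fixes \<rho> :: real
  assumes "0 \<le> \<rho>" "\<rho> < 1"
  shows "(\<Sum>i<n. \<rho> ^ i) \<le> 1 / (1 - \<rho>)"
proof -
  have "norm \<rho> < 1" using assms by simp
  then have "(\<Sum>i<n. \<rho> ^ i) \<le> (\<Sum>i. \<rho> ^ i)"
    using assms by (intro sum_le_suminf summable_geometric) auto
  with \<open>norm \<rho> < 1\<close> show ?thesis by (simp add: suminf_geometric)
qed

lemma sum_power_dist_le:
  fixes \<rho> :: real
  assumes "0 \<le> \<rho>" "\<rho> < 1"
  shows "(\<Sum>j = a..b. \<rho> ^ nat \<bar>int k - int j\<bar>) \<le> (1 + \<rho>) / (1 - \<rho>)"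
proof -
  let ?f = "\<lambda>j. \<rho> ^ nat \<bar>int k - int j\<bar>"
  have below: "(\<Sum>j<k. ?f j) \<le> \<rho> / (1 - \<rho>)"
  proof -
    have "(\<Sum>j<k. ?f j) = (\<Sum>i<k. ?f (k - Suc i))"
      by (rule sum.nat_diff_reindex[symmetric])
    also have "\<dots> = \<rho> * (\<Sum>i<k. \<rho> ^ i)"
      by (simp add: sum_distrib_left nat_add_distrib)
    also have "\<dots> \<le> \<rho> * (1 / (1 - \<rho>))"
      using sum_power_lessThan_le assms by (intro mult_left_mono) auto
    finally show ?thesis by simp
  qed
  have above: "(\<Sum>j = k..b. ?f j) \<le> 1 / (1 - \<rho>)"
  proof (cases "k \<le> b")
    case True
    have "(\<Sum>j = k..b. ?f j) = (\<Sum>i<Suc (b - k). \<rho> ^ i)"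
      using sum.atLeastAtMost_shift_0[OF True, of ?f]
      by (simp add: atLeast0AtMost lessThan_Suc_atMost)
    then show ?thesis using sum_power_lessThan_le[OF assms, of "Suc (b - k)"] by (simp del: sum.lessThan_Suc)
  qed (use assms in simp)
  have "(\<Sum>j = a..b. ?f j) \<le> (\<Sum>j \<in> {..<k} \<union> {k..b}. ?f j)"
    using assms by (intro sum_mono2) auto
  also have "\<dots> = (\<Sum>j<k. ?f j) + (\<Sum>j = k..b. ?f j)"
    by (rule sum.union_disjoint) auto
  also have "\<dots> \<le> \<rho> / (1 - \<rho>) + 1 / (1 - \<rho>)"
    using below above by simp
  finally show ?thesis by (simp add: add_divide_distrib add.commute)
qed

lemma Psi_sq_le_if_in_Neps:
  assumes "in_Neps a b \<epsilon> x u l xs us ls" "a \<le> j" "j \<le> b"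
  shows "(Psi b x u l xs us ls j)\<^sup>2 \<le> 3 * \<epsilon>\<^sup>2"
proof (cases "j < b")
  case True
  with assms have "norm (x j - xs j) \<le> \<epsilon>" "norm (u j - us j) \<le> \<epsilon>"
    "norm (l (int j) - ls (int j)) \<le> \<epsilon>"
    by (auto simp: in_Neps_def)
  then have "(norm (x j - xs j))\<^sup>2 \<le> \<epsilon>\<^sup>2" "(norm (u j - us j))\<^sup>2 \<le> \<epsilon>\<^sup>2"
    "(norm (l (int j) - ls (int j)))\<^sup>2 \<le> \<epsilon>\<^sup>2"
    by (auto intro: power_mono)
  with True show ?thesis by (simp add: Psi_def)
next
  case False
  from assms(1) have "(norm (x b - xs b))\<^sup>2 \<le> \<epsilon>\<^sup>2"
    by (auto simp: in_Neps_def intro: power_mono)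
  moreover have "Psi b x u l xs us ls j = norm (x b - xs b)"
    using False by (simp add: Psi_def)
  ultimately show ?thesis using zero_le_power2[of \<epsilon>] by (simp only:)
qed

lemma stage_errors_le_Psi:
  assumes "k < b"
  shows "norm (x k - xs k) \<le> Psi b x u l xs us ls k"
    and "norm (u k - us k) \<le> Psi b x u l xs us ls k"
    and "norm (l (int k) - ls (int k)) \<le> Psi b x u l xs us ls k"
  using assms by (auto simp: Psi_def intro!: real_le_rsqrt)

lemma one_step_error_le_eps:
  fixes \<rho> C \<epsilon> e0 \<Psi>1 :: real and \<Psi>0 :: "nat \<Rightarrow> real"
  assumes rec: "\<Psi>1 \<le> C * ((\<Sum>j = a..b. \<rho> ^ nat \<bar>int k - int j\<bar> * (\<Psi>0 j)\<^sup>2)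
                          + \<rho> ^ (k - a) * e0 + \<rho> ^ (b - k) * \<epsilon>)"
    and \<Psi>0_le: "\<And>j. a \<le> j \<Longrightarrow> j \<le> b \<Longrightarrow> (\<Psi>0 j)\<^sup>2 \<le> 3 * \<epsilon>\<^sup>2"
    and e0_le: "e0 \<le> \<epsilon>" and left_le: "\<rho> ^ (k - a) \<le> \<epsilon>" and right_le: "\<rho> ^ (b - k) \<le> \<epsilon>"
    and \<rho>: "0 < \<rho>" "\<rho> < 1" and C_pos: "0 < C"
    and \<epsilon>: "0 \<le> \<epsilon>" "\<epsilon> \<le> (1 - \<rho>) / (16 * C * (1 + \<rho>))"
  shows "\<Psi>1 \<le> \<epsilon>"
proof -
  define q where "q = (1 + \<rho>) / (1 - \<rho>)"
  have q_ge: "1 \<le> q" using \<rho> by (simp add: q_def field_simps)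
  have "\<epsilon> * (16 * C * (1 + \<rho>)) \<le> 1 - \<rho>"
    using \<epsilon>(2) \<rho> C_pos by (simp add: pos_le_divide_eq)
  then have Cq: "C * \<epsilon> * q \<le> 1 / 16"
    using \<rho> by (simp add: q_def field_simps)
  have "(\<Sum>j = a..b. \<rho> ^ nat \<bar>int k - int j\<bar> * (\<Psi>0 j)\<^sup>2)
      \<le> (\<Sum>j = a..b. \<rho> ^ nat \<bar>int k - int j\<bar> * (3 * \<epsilon>\<^sup>2))"
    using \<Psi>0_le \<rho> by (intro sum_mono mult_left_mono) auto
  also have "\<dots> = 3 * \<epsilon>\<^sup>2 * (\<Sum>j = a..b. \<rho> ^ nat \<bar>int k - int j\<bar>)"
    by (simp add: sum_distrib_left mult.commute)
  also have "\<dots> \<le> 3 * \<epsilon>\<^sup>2 * q"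
    unfolding q_def using sum_power_dist_le \<rho> by (intro mult_left_mono) auto
  finally have coupling: "(\<Sum>j = a..b. \<rho> ^ nat \<bar>int k - int j\<bar> * (\<Psi>0 j)\<^sup>2) \<le> 3 * \<epsilon>\<^sup>2 * q" .
  have "\<rho> ^ (k - a) * e0 \<le> \<rho> ^ (k - a) * \<epsilon>"
    using e0_le \<rho> by (intro mult_left_mono) auto
  also have "\<dots> \<le> \<epsilon> * \<epsilon>"
    using left_le \<epsilon> by (intro mult_right_mono) auto
  finally have "\<rho> ^ (k - a) * e0 \<le> \<epsilon>\<^sup>2" by (simp add: power2_eq_square)
  moreover have "\<rho> ^ (b - k) * \<epsilon> \<le> \<epsilon>\<^sup>2"
    using right_le \<epsilon> by (simp add: power2_eq_square mult_right_mono)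
  moreover have "2 * \<epsilon>\<^sup>2 \<le> 2 * \<epsilon>\<^sup>2 * q"
    using mult_left_mono[OF q_ge, of "2 * \<epsilon>\<^sup>2"] by simp
  ultimately have "(\<Sum>j = a..b. \<rho> ^ nat \<bar>int k - int j\<bar> * (\<Psi>0 j)\<^sup>2)
                   + \<rho> ^ (k - a) * e0 + \<rho> ^ (b - k) * \<epsilon> \<le> 5 * \<epsilon>\<^sup>2 * q"
    using coupling by linarith
  then have "\<Psi>1 \<le> C * (5 * \<epsilon>\<^sup>2 * q)"
    using rec C_pos by (meson order.trans mult_left_mono less_imp_le)
  also have "\<dots> = \<epsilon> * (5 * (C * \<epsilon> * q))" by (simp add: power2_eq_square)
  also have "\<dots> \<le> \<epsilon> * 1"
    using Cq \<epsilon>(1) by (intro mult_left_mono) auto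
  finally show ?thesis by simp
qed

lemma interior_stage_errors_le_eps:
  assumes rec: "Psi b x1 u1 l1 xs us ls k
      \<le> C * ((\<Sum>j = a..b. \<rho> ^ nat \<bar>int k - int j\<bar> * (Psi b x0 u0 l0 xs us ls j)\<^sup>2)
              + \<rho> ^ (k - a) * norm (x0 a - xs a) + \<rho> ^ (b - k) * \<epsilon>)"
    and in_nbhd: "in_Neps a b \<epsilon> x0 u0 l0 xs us ls"
    and k: "a + L \<le> k" "k + L \<le> b" and L_pos: "1 \<le> L"
    and \<rho>: "0 < \<rho>" "\<rho> < 1" "\<rho> ^ L \<le> \<epsilon>"
    and C_pos: "0 < C" and \<epsilon>_le: "\<epsilon> \<le> (1 - \<rho>) / (16 * C * (1 + \<rho>))"
  shows "norm (x1 k - xs k) \<le> \<epsilon> \<and> norm (u1 k - us k) \<le> \<epsilon> \<and> norm (l1 (int k) - ls (int k)) \<le> \<epsilon>"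
proof -
  have power_le: "\<rho> ^ m \<le> \<epsilon>" if "L \<le> m" for m
    using power_decreasing[OF that, of \<rho>] \<rho> by linarith
  have "Psi b x1 u1 l1 xs us ls k \<le> \<epsilon>"
  proof (rule one_step_error_le_eps[OF rec])
    show "norm (x0 a - xs a) \<le> \<epsilon>"
      using in_nbhd k L_pos by (auto simp: in_Neps_def)
    show "\<rho> ^ (k - a) \<le> \<epsilon>" "\<rho> ^ (b - k) \<le> \<epsilon>"
      using k by (auto intro: power_le)
    show "0 \<le> \<epsilon>"
      using \<rho> by (meson order.trans zero_le_power less_imp_le)
  qed (use Psi_sq_le_if_in_Neps[OF in_nbhd] \<rho> C_pos \<epsilon>_le in simp_all)
  moreover have "k < b" using k L_pos by linarith
  ultimately show ?thesis using stage_errors_le_Psi[of k b] by (meson order.trans)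
qed

lemma n1_Suc: "1 \<le> i \<Longrightarrow> n1 L (Suc i) = n1 L i + L"
  by (cases i) (auto simp: n1_def)

lemma n2_eq_of_lt_Thor:
  assumes "1 \<le> L" "1 \<le> i" "i < Thor L M N"
  shows "n2 L M N i = n1 L i + M"
proof -
  have "real (i - 1) < (real N - real M) / real L"
    using assms unfolding Thor_def by (simp add: less_ceiling_iff[symmetric]) linarith
  then have "real ((i - 1) * L + M) < real N"
    using assms(1) by (simp add: pos_less_divide_eq)
  then show ?thesis unfolding n2_def n1_def by linarith
qed

lemma n2_Suc_le:
  assumes "1 \<le> L" "1 \<le> i" "i < Thor L M N"
  shows "n2 L M N (Suc i) \<le> n2 L M N i + L"
  using n2_eq_of_lt_Thor[OF assms] n1_Suc[OF assms(2)] by (simp add: n2_def)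

theorem theorem3:
  fixes L S M N :: nat
    and \<epsilon> \<rho> UpsC :: real
    and xs xg :: "nat \<Rightarrow> real^'nx" and us ug :: "nat \<Rightarrow> real^'nu" and ls lg :: "int \<Rightarrow> real^'nx"
    and x0 x1 :: "nat \<Rightarrow> nat \<Rightarrow> real^'nx" and u0 u1 :: "nat \<Rightarrow> nat \<Rightarrow> real^'nu"
    and l0 l1 :: "nat \<Rightarrow> int \<Rightarrow> real^'nx"
    and xbar0 :: "real^'nx"
  assumes L_pos: "L \<ge> 1" and S_gt: "S > 2" and M_def: "M = S * L" and N_ge: "N \<ge> M"
    and UpsC_pos: "UpsC > 0" and rho_pos: "0 < \<rho>" and rho_lt: "\<rho> < 1"
    and eps_lo: "\<rho> ^ L \<le> \<epsilon>"
    and eps_hi: "\<epsilon> \<le> (1 - \<rho>) / (16 * UpsC * (1 + \<rho>))"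
    \<comment> \<open>initial guess\<close>
    and guess_x: "\<And>k. k \<le> N \<Longrightarrow> norm (xg k - xs k) \<le> \<epsilon>"
    and guess_u: "\<And>k. k < N \<Longrightarrow> norm (ug k - us k) \<le> \<epsilon>"
    and guess_l: "\<And>k. -1 \<le> k \<Longrightarrow> k < int N \<Longrightarrow> norm (lg k - ls k) \<le> \<epsilon>"
    and guess_x0: "xg 0 = xbar0"
    \<comment> \<open>Algorithm 1, initialisation of horizon 1\<close>
    and init1_x: "\<And>k. k \<le> M \<Longrightarrow> x0 1 k = xg k"
    and init1_u: "\<And>k. k < M \<Longrightarrow> u0 1 k = ug k"
    and init1_l: "\<And>k. -1 \<le> k \<Longrightarrow> k < int M \<Longrightarrow> l0 1 k = lg k"
    \<comment> \<open>Algorithm 1, warm start of horizon i >= 2\<close>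
    and warm_bar: "\<And>i. 2 \<le> i \<Longrightarrow> i \<le> Thor L M N \<Longrightarrow> x0 i (n1 L i) = x1 (i - 1) (n1 L i)"
    and warm_shift: "\<And>i k. 2 \<le> i \<Longrightarrow> i \<le> Thor L M N \<Longrightarrow> n1 L i \<le> k \<Longrightarrow> k + 2 * L \<le> n2 L M N i \<Longrightarrow>
        x0 i k = x1 (i - 1) k \<and> u0 i k = u1 (i - 1) k \<and> l0 i (int k) = l1 (i - 1) (int k)"
    and warm_guess: "\<And>i k. 2 \<le> i \<Longrightarrow> i \<le> Thor L M N \<Longrightarrow> n2 L M N i < k + 2 * L \<Longrightarrow> k < n2 L M N i \<Longrightarrow>
        x0 i k = xg k \<and> u0 i k = ug k \<and> l0 i (int k) = lg (int k)"
    and warm_term: "\<And>i. 2 \<le> i \<Longrightarrow> i \<le> Thor L M N \<Longrightarrow> x0 i (n2 L M N i) = xg (n2 L M N i)"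
    and warm_mult: "\<And>i. 2 \<le> i \<Longrightarrow> i \<le> Thor L M N \<Longrightarrow>
        l0 i (int (n1 L i) - 1) = l1 (i - 1) (int (n1 L i) - 1)"
    \<comment> \<open>the one-step error recursion\<close>
    and recursion: "\<And>i k. 1 \<le> i \<Longrightarrow> i \<le> Thor L M N \<Longrightarrow>
        in_Neps (n1 L i) (n2 L M N i) \<epsilon> (x0 i) (u0 i) (l0 i) xs us ls \<Longrightarrow>
        n1 L i \<le> k \<Longrightarrow> k \<le> n2 L M N i \<Longrightarrow>
        Psi (n2 L M N i) (x1 i) (u1 i) (l1 i) xs us ls k
          \<le> UpsC * ((\<Sum>j = n1 L i..n2 L M N i.
                        \<rho> ^ (nat \<bar>int k - int j\<bar>) * (Psi (n2 L M N i) (x0 i) (u0 i) (l0 i) xs us ls j)\<^sup>2)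
                     + \<rho> ^ (k - n1 L i) * norm (x0 i (n1 L i) - xs (n1 L i))
                     + \<rho> ^ (n2 L M N i - k) * \<epsilon>)"
  shows "\<forall>i. 1 \<le> i \<and> i \<le> Thor L M N - 1 \<longrightarrow>
           in_Neps (n1 L i) (n2 L M N i) \<epsilon> (x0 i) (u0 i) (l0 i) xs us ls \<longrightarrow>
           in_Neps (n1 L (i + 1)) (n2 L M N (i + 1)) \<epsilon> (x0 (i + 1)) (u0 (i + 1)) (l0 (i + 1)) xs us ls"
proof (intro allI impI)
  fix i assume i: "1 \<le> i \<and> i \<le> Thor L M N - 1"
    and in_nbhd: "in_Neps (n1 L i) (n2 L M N i) \<epsilon> (x0 i) (u0 i) (l0 i) xs us ls"
  have i_lt: "i < Thor L M N" using i by (simp add: Thor_def)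
  have i_next: "2 \<le> i + 1" "i + 1 \<le> Thor L M N" using i i_lt by auto
  have n1_next: "n1 L (i + 1) = n1 L i + L" using i n1_Suc by simp
  have n2_next: "n2 L M N (i + 1) \<le> n2 L M N i + L" "n2 L M N (i + 1) \<le> N"
    using n2_Suc_le[OF L_pos _ i_lt] i by (auto simp: n2_def)
  have output_ok: "norm (x1 i k - xs k) \<le> \<epsilon> \<and> norm (u1 i k - us k) \<le> \<epsilon>
      \<and> norm (l1 i (int k) - ls (int k)) \<le> \<epsilon>"
    if "n1 L i + L \<le> k" "k + L \<le> n2 L M N i" for k
    using interior_stage_errors_le_eps[OF recursion[of i k] in_nbhd that L_pos rho_pos rho_lt eps_lo
        UpsC_pos eps_hi] i i_lt in_nbhd that by simp
  show "in_Neps (n1 L (i + 1)) (n2 L M N (i + 1)) \<epsilon> (x0 (i + 1)) (u0 (i + 1)) (l0 (i + 1)) xs us ls"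
    unfolding in_Neps_def
  proof (rule conjI, intro allI impI)
    fix k assume k: "n1 L (i + 1) \<le> k \<and> k < n2 L M N (i + 1)"
    show "norm (x0 (i + 1) k - xs k) \<le> \<epsilon> \<and> norm (u0 (i + 1) k - us k) \<le> \<epsilon>
        \<and> norm (l0 (i + 1) (int k) - ls (int k)) \<le> \<epsilon>"
    proof (cases "k + 2 * L \<le> n2 L M N (i + 1)")
      case True
      then show ?thesis
        using warm_shift[OF i_next, of k] output_ok[of k] k n1_next n2_next by auto
    next
      case False
      then show ?thesis
        using warm_guess[OF i_next, of k] guess_x[of k] guess_u[of k] guess_l[of "int k"] k n2_next
        by auto
    qed
  next
    show "norm (x0 (i + 1) (n2 L M N (i + 1)) - xs (n2 L M N (i + 1))) \<le> \<epsilon>"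
      using warm_term[OF i_next] guess_x n2_next by simp
  qed
qed

end
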